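(* Let $F_0,\dots,F_m\in\mathbb C[t_0,t_1,t_2]$ be homogeneous polynomials defining projective plane curves $\mathcal C_0,\dots,\mathcal C_m\subset\mathbb P^2$, and suppose: (i) $F_1,\dots,F_m$ have positive degree in $t_0$; (ii) $F_1,\dots,F_m$ have the same total degree; (iii) $\gcd(F_1,\dots,F_m)=1$. Let $\bar c=(c_1,\dots,c_m)$ be new variables, $F(\bar c,\bar t_h)=c_1F_1+\dots+c_mF_m$, and $R(\bar c,t_1,t_2)=\operatorname{Res}_{t_0}(F_0,F)$. Let $\operatorname{lc}_{t_0}(F_0)\in\mathbb C[t_1,t_2]$ and $\operatorname{lc}_{t_0}(F)\in\mathbb C[\bar c,t_1,t_2]$ be the leading coefficients with respect to $t_0$. If $\bar t^o=(t_1^o,t_2^o)\in\mathbb C^2\setminus\{\bar0\}$ satisfies $\operatorname{Con}_{\bar c}(R)(\bar t^o)=0$ and $\operatorname{lc}_{t_0}(F_0)(\bar t^o)\cdot\operatorname{lc}_{t_0}(F)(\bar c,\bar t^o)\neq0$ (the latter as a polynomial in $\bar c$), then there exists $t_0^o\in\mathbb C$ such that $(t_0^o:t_1^o:t_2^o)\in\bigcap_{i=0}^m\mathcal C_i$.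
   Context: $\operatorname{Res}_{t_0}$ is the univariate resultant with respect to $t_0$; $\operatorname{Con}_{\bar c}(R)\in\mathbb C[t_1,t_2]$ is the content of $R$ viewed as a polynomial in $\bar c$ with coefficients in $\mathbb C[t_1,t_2]$ (gcd of its coefficients). $\bar t_h=(t_0,t_1,t_2)$. *)

theory Defs
  imports "Subresultants.Resultant_Prelim" "HOL-Library.Poly_Mapping"
    "HOL-Computational_Algebra.Polynomial_Factorial" "HOL-Computational_Algebra.Field_as_Ring"
begin

text \<open>A polynomial in C[t1,t2] is represented as complex poly poly: the outer variable is t2,
  the inner variable is t1.
  A polynomial in C[t0,t1,t2] is represented as complex poly poly poly: the outer variable is t0,
  with coefficients in C[t1,t2].  Thus lead_coeff and resultant of the outer
  polynomial are the leading coefficient and the resultant with respect to t0.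
  Polynomials in the m new variables c_1,...,c_m with coefficients in a ring are
  represented as (nat =>0 nat) =>0 coefficient (exponent vector to coefficient).\<close>

type_synonym poly2 = "complex poly poly"
type_synonym poly3 = "complex poly poly poly"
type_synonym 'a cpoly = "(nat \<Rightarrow>\<^sub>0 nat) \<Rightarrow>\<^sub>0 'a"

definition eval2 :: "poly2 \<Rightarrow> complex \<Rightarrow> complex \<Rightarrow> complex" where
  "eval2 q a1 a2 = poly (map_poly (\<lambda>p. poly p a1) q) a2"

definition eval3 :: "poly3 \<Rightarrow> complex \<Rightarrow> complex \<Rightarrow> complex \<Rightarrow> complex" where
  "eval3 F a0 a1 a2 = poly (map_poly (\<lambda>q. eval2 q a1 a2) F) a0"

text \<open>Homogeneity of total degree d: every monomial t0^i t1^k t2^j with nonzero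
  coefficient has i + j + k = d.\<close>
definition homogeneous3 :: "nat \<Rightarrow> poly3 \<Rightarrow> bool" where
  "homogeneous3 d F \<longleftrightarrow>
     (\<forall>i j k. coeff (coeff (coeff F i) j) k \<noteq> 0 \<longrightarrow> i + j + k = d)"

definition defines_curve :: "poly3 \<Rightarrow> bool" where
  "defines_curve F \<longleftrightarrow> F \<noteq> 0 \<and> (\<exists>d>0. homogeneous3 d F)"

definition cconst :: "'a::zero \<Rightarrow> 'a cpoly" where
  "cconst a = Poly_Mapping.single 0 a"

definition cvar :: "nat \<Rightarrow> 'a::{zero,one} cpoly" where
  "cvar i = Poly_Mapping.single (Poly_Mapping.single i 1) 1"

definition content_c :: "poly2 cpoly \<Rightarrow> poly2" where
  "content_c R = Gcd (range (Poly_Mapping.lookup R))"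

definition generic_comb :: "nat \<Rightarrow> (nat \<Rightarrow> poly3) \<Rightarrow> poly2 cpoly poly" where
  "generic_comb m F = (\<Sum>i\<in>{1..m}. smult (cvar i) (map_poly cconst (F i)))"

definition lift_c :: "poly3 \<Rightarrow> poly2 cpoly poly" where
  "lift_c F0 = map_poly cconst F0"

end

theory Submission
  imports Defs "HOL-Computational_Algebra.Fundamental_Theorem_Algebra" "Subresultants.Subresultant_Gcd"
begin

(* Write f_i for F_i with (t1,t2) specialised to the given point, a
   polynomial in t0 over C.  The resultant R lives in C[t1,t2][c]; since its content
   vanishes at (t1,t2), every coefficient of R vanishes there.  We specialise the
   variables c_i further by the Kronecker substitution c_i := x^i for a suitable
   complex number x.  This is a ring homomorphism C[t1,t2][c] -> C which kills R, and,
   for x avoiding the finitely many roots of one nonzero polynomial, it keeps the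
   t0-degrees of F_0 and of F = sum c_i F_i.  Resultants commute with such
   homomorphisms, so Res(f_0, sum x^i f_i) = 0 and f_0, sum x^i f_i have a common root
   beta.  Choosing x also outside the roots of sum_i f_i(alpha) X^i for the finitely
   many roots alpha of f_0 at which some f_i does not vanish, the equation
   sum x^i f_i(beta) = 0 forces f_i(beta) = 0 for all i, so t0 := beta works.
   Only the hypotheses on the content and on the two leading coefficients enter this
   argument. *)

text \<open>The Kronecker weight of the monomial c_1^{e_1} c_2^{e_2} ... is sum_i i * e_i, so that
  substituting c_i := x^i maps this monomial to x^(weight).\<close>
definition kronecker_weight :: "(nat \<Rightarrow>\<^sub>0 nat) \<Rightarrow> nat" where
  "kronecker_weight \<mu> = (\<Sum>i\<in>Poly_Mapping.keys \<mu>. i * Poly_Mapping.lookup \<mu> i)"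

lemma kronecker_weight_superset:
  "finite S \<Longrightarrow> Poly_Mapping.keys \<mu> \<subseteq> S \<Longrightarrow>
     kronecker_weight \<mu> = (\<Sum>i\<in>S. i * Poly_Mapping.lookup \<mu> i)"
  unfolding kronecker_weight_def by (rule sum.mono_neutral_left) (auto simp: in_keys_iff)

lemma kronecker_weight_add: "kronecker_weight (a + b) = kronecker_weight a + kronecker_weight b"
proof -
  let ?S = "Poly_Mapping.keys a \<union> Poly_Mapping.keys b"
  have "kronecker_weight (a + b) = (\<Sum>i\<in>?S. i * Poly_Mapping.lookup (a + b) i)"
    by (rule kronecker_weight_superset) (auto simp: keys_add)
  also have "\<dots> = (\<Sum>i\<in>?S. i * Poly_Mapping.lookup a i) + (\<Sum>i\<in>?S. i * Poly_Mapping.lookup b i)"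
    by (simp add: lookup_add distrib_left sum.distrib)
  also have "\<dots> = kronecker_weight a + kronecker_weight b"
    using kronecker_weight_superset[of ?S a] kronecker_weight_superset[of ?S b] by simp
  finally show ?thesis .
qed

definition kronecker_eval ::
    "('a::comm_ring_1 \<Rightarrow> 'b::comm_ring_1) \<Rightarrow> 'b \<Rightarrow> 'a cpoly \<Rightarrow> 'b" where
  "kronecker_eval h x R =
     (\<Sum>\<mu>\<in>Poly_Mapping.keys R. h (Poly_Mapping.lookup R \<mu>) * x ^ kronecker_weight \<mu>)"

lemma update_as_sum:
  "k \<notin> Poly_Mapping.keys f \<Longrightarrow> Poly_Mapping.update k v f = f + Poly_Mapping.single k v"
  by (rule poly_mapping_eqI)
    (auto simp: lookup_update lookup_add lookup_single in_keys_iff when_def)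

context
  fixes h :: "'a::comm_ring_1 \<Rightarrow> 'b::comm_ring_1"
  assumes hom: "comm_ring_hom h"
begin

interpretation h: comm_ring_hom h by (rule hom)

lemma kronecker_eval_superset:
  "finite S \<Longrightarrow> Poly_Mapping.keys R \<subseteq> S \<Longrightarrow>
     kronecker_eval h x R = (\<Sum>\<mu>\<in>S. h (Poly_Mapping.lookup R \<mu>) * x ^ kronecker_weight \<mu>)"
  unfolding kronecker_eval_def by (rule sum.mono_neutral_left) (auto simp: in_keys_iff)

lemma kronecker_eval_add: "kronecker_eval h x (a + b) = kronecker_eval h x a + kronecker_eval h x b"
proof -
  let ?S = "Poly_Mapping.keys a \<union> Poly_Mapping.keys b"
  let ?term = "\<lambda>R \<mu>. h (Poly_Mapping.lookup R \<mu>) * x ^ kronecker_weight \<mu>"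
  have "kronecker_eval h x (a + b) = (\<Sum>\<mu>\<in>?S. ?term (a + b) \<mu>)"
    by (rule kronecker_eval_superset) (auto simp: keys_add)
  also have "\<dots> = (\<Sum>\<mu>\<in>?S. ?term a \<mu>) + (\<Sum>\<mu>\<in>?S. ?term b \<mu>)"
    by (simp add: lookup_add algebra_simps sum.distrib h.hom_add)
  also have "\<dots> = kronecker_eval h x a + kronecker_eval h x b"
    using kronecker_eval_superset[of ?S a] kronecker_eval_superset[of ?S b] by simp
  finally show ?thesis .
qed

lemma kronecker_eval_single:
  "kronecker_eval h x (Poly_Mapping.single \<mu> a) = h a * x ^ kronecker_weight \<mu>"
  by (subst kronecker_eval_superset[of "{\<mu>}"]) (auto simp: lookup_single)

lemma kronecker_eval_mult_single:
  "kronecker_eval h x (Poly_Mapping.single \<mu> a * q) =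
     kronecker_eval h x (Poly_Mapping.single \<mu> a) * kronecker_eval h x q"
proof (induction q rule: update_induct)
  case const
  show ?case by (simp add: kronecker_eval_def)
next
  case (update g k v)
  have split: "Poly_Mapping.update k v g = g + Poly_Mapping.single k v"
    using update(1) by (rule update_as_sum)
  have "kronecker_eval h x (Poly_Mapping.single (\<mu> + k) (a * v)) =
      kronecker_eval h x (Poly_Mapping.single \<mu> a) * kronecker_eval h x (Poly_Mapping.single k v)"
    by (simp only: kronecker_eval_single kronecker_weight_add h.hom_mult power_add mult_ac)
  then show ?case
    using update(3) by (simp add: split distrib_left kronecker_eval_add mult_single)
qed

lemma kronecker_eval_mult: "kronecker_eval h x (p * q) = kronecker_eval h x p * kronecker_eval h x q"
proof (induction p rule: update_induct)
  case const
  show ?case by (simp add: kronecker_eval_def)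
next
  case (update g k v)
  then show ?case
    by (simp add: update_as_sum distrib_right kronecker_eval_add kronecker_eval_mult_single)
qed

lemma kronecker_eval_hom: "comm_ring_hom (kronecker_eval h x)"
proof
  show "kronecker_eval h x 0 = 0" by (simp add: kronecker_eval_def)
  have "kronecker_eval h x (Poly_Mapping.single 0 1) = 1"
    by (simp add: kronecker_eval_single kronecker_weight_def del: single_one)
  then show "kronecker_eval h x 1 = 1" by simp
qed (simp_all add: kronecker_eval_add kronecker_eval_mult)

lemma kronecker_eval_cconst: "kronecker_eval h x (cconst a) = h a"
  by (simp add: cconst_def kronecker_eval_single kronecker_weight_def)

lemma kronecker_eval_cvar: "kronecker_eval h x (cvar i) = x ^ i"
  by (simp add: cvar_def kronecker_eval_single kronecker_weight_def)

end

text \<open>If h kills the gcd of the coefficients of R, it kills every coefficient, hence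
  every Kronecker evaluation of R vanishes.  This is where the hypothesis on the
  content is used.\<close>
lemma kronecker_eval_content_zero:
  assumes "comm_ring_hom h" and "h (content_c R) = 0"
  shows "kronecker_eval h x R = 0"
proof -
  interpret h: comm_ring_hom h by fact
  have "h (Poly_Mapping.lookup R \<mu>) = 0" for \<mu>
  proof -
    have "content_c R dvd Poly_Mapping.lookup R \<mu>"
      unfolding content_c_def by (rule Gcd_dvd) simp
    then have "h (content_c R) dvd h (Poly_Mapping.lookup R \<mu>)" by (rule h.hom_dvd)
    with assms(2) show ?thesis by simp
  qed
  then show ?thesis by (simp add: kronecker_eval_def)
qed

lemma cconst_eq_0_iff [simp]: "cconst a = 0 \<longleftrightarrow> a = 0"
  by (metis cconst_def lookup_single_eq single_zero)

lemma degree_lift_c: "degree (lift_c F0) = degree F0"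
  unfolding lift_c_def by (rule degree_map_poly) simp

lemma eval2_hom: "comm_ring_hom (\<lambda>q. eval2 q a1 a2)"
proof -
  interpret inner: comm_ring_hom "\<lambda>p::complex poly. poly p a1" by unfold_locales auto
  interpret outer: map_poly_comm_ring_hom "\<lambda>p::complex poly. poly p a1" ..
  show ?thesis by unfold_locales (simp_all add: eval2_def outer.hom_add outer.hom_mult)
qed

text \<open>The polynomial sum_i b_i X^i in the auxiliary variable X: it is the Kronecker image
  of the linear form sum_i b_i c_i.\<close>
definition linear_form_poly :: "nat \<Rightarrow> (nat \<Rightarrow> complex) \<Rightarrow> complex poly" where
  "linear_form_poly m b = (\<Sum>i\<in>{1..m}. monom (b i) i)"

lemma poly_linear_form_poly: "poly (linear_form_poly m b) x = (\<Sum>i\<in>{1..m}. b i * x ^ i)"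
  by (simp add: linear_form_poly_def poly_sum poly_monom)

lemma linear_form_poly_nonzero:
  assumes "j \<in> {1..m}" and "b j \<noteq> 0"
  shows "linear_form_poly m b \<noteq> 0"
proof -
  have "coeff (linear_form_poly m b) j = (\<Sum>i\<in>{1..m}. if i = j then b i else 0)"
    by (simp add: linear_form_poly_def coeff_sum)
  also have "\<dots> = b j" using assms(1) by simp
  finally show ?thesis using assms(2) by auto
qed

lemma lead_coeff_generic_comb:
  "lead_coeff (generic_comb m F) =
     (\<Sum>i\<in>{1..m}. cvar i * cconst (coeff (F i) (degree (generic_comb m F))))"
  by (subst (1) generic_comb_def) (simp add: coeff_sum coeff_map_poly)

lemma lead_coeff_generic_comb_witness:
  assumes "comm_ring_hom h"
    and "h (Poly_Mapping.lookup (lead_coeff (generic_comb m F)) \<mu>) \<noteq> 0"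
  shows "linear_form_poly m (\<lambda>i. h (coeff (F i) (degree (generic_comb m F)))) \<noteq> 0"
proof -
  interpret h: comm_ring_hom h by fact
  let ?a = "\<lambda>i. coeff (F i) (degree (generic_comb m F))"
  have "Poly_Mapping.lookup (cvar i * cconst c) \<mu> = (c when Poly_Mapping.single i 1 = \<mu>)"
    for i and c :: poly2
    by (simp add: cvar_def cconst_def mult_single lookup_single when_def)
  then have "h (Poly_Mapping.lookup (lead_coeff (generic_comb m F)) \<mu>) =
      (\<Sum>i\<in>{1..m}. h (?a i when Poly_Mapping.single i 1 = \<mu>))"
    by (simp add: lead_coeff_generic_comb lookup_sum h.hom_sum)
  with assms(2) obtain j where "j \<in> {1..m}" "h (?a j when Poly_Mapping.single j 1 = \<mu>) \<noteq> 0"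
    by (metis (no_types, lifting) sum.neutral)
  then show ?thesis
    by (intro linear_form_poly_nonzero[of j]) (auto simp: when_def split: if_splits)
qed

context
  fixes h :: "poly2 \<Rightarrow> complex" and x :: complex
  assumes hom: "comm_ring_hom h"
begin

interpretation h: comm_ring_hom h by (rule hom)

interpretation E: comm_ring_hom "kronecker_eval h x"
  using hom by (rule kronecker_eval_hom)

lemma kronecker_eval_lift_c: "map_poly (kronecker_eval h x) (lift_c F0) = map_poly h F0"
  by (simp add: lift_c_def map_poly_map_poly o_def kronecker_eval_cconst[OF hom])

lemma kronecker_eval_generic_comb:
  "map_poly (kronecker_eval h x) (generic_comb m F) = (\<Sum>i\<in>{1..m}. smult (x ^ i) (map_poly h (F i)))"
  by (rule poly_eqI)
    (simp add: generic_comb_def coeff_map_poly coeff_sum E.hom_sum E.hom_mult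
      kronecker_eval_cconst[OF hom] kronecker_eval_cvar[OF hom])

lemma kronecker_eval_lead_coeff_generic_comb:
  "kronecker_eval h x (lead_coeff (generic_comb m F)) =
     poly (linear_form_poly m (\<lambda>i. h (coeff (F i) (degree (generic_comb m F))))) x"
  by (simp add: lead_coeff_generic_comb poly_linear_form_poly E.hom_sum E.hom_mult mult.commute
      kronecker_eval_cconst[OF hom] kronecker_eval_cvar[OF hom])

end

lemma degree_map_poly_lead_coeff:
  assumes "\<phi> 0 = 0" and "\<phi> (lead_coeff p) \<noteq> 0"
  shows "degree (map_poly \<phi> p) = degree p"
proof (rule antisym)
  show "degree (map_poly \<phi> p) \<le> degree p"
    by (rule degree_le) (simp add: coeff_map_poly coeff_eq_0 assms(1))
  show "degree p \<le> degree (map_poly \<phi> p)"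
    by (rule le_degree) (simp add: coeff_map_poly assms)
qed

definition separating :: "nat \<Rightarrow> (nat \<Rightarrow> complex poly) \<Rightarrow> complex \<Rightarrow> bool" where
  "separating m f x \<longleftrightarrow>
     (\<forall>\<alpha>. poly (f 0) \<alpha> = 0 \<and> (\<exists>i\<in>{1..m}. poly (f i) \<alpha> \<noteq> 0) \<longrightarrow>
        poly (linear_form_poly m (\<lambda>i. poly (f i) \<alpha>)) x \<noteq> 0)"

text \<open>Outside finitely many points, x is separating and avoids the roots of a given
  nonzero polynomial Q: only finitely many nonzero polynomials have to be avoided.\<close>
lemma separating_point_exists:
  fixes f :: "nat \<Rightarrow> complex poly"
  assumes "f 0 \<noteq> 0" and "Q \<noteq> 0"
  shows "\<exists>x. poly Q x \<noteq> 0 \<and> separating m f x"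
proof -
  define B where "B = {\<alpha>. poly (f 0) \<alpha> = 0 \<and> (\<exists>i\<in>{1..m}. poly (f i) \<alpha> \<noteq> 0)}"
  define P where "P \<alpha> = linear_form_poly m (\<lambda>i. poly (f i) \<alpha>)" for \<alpha>
  have "finite B"
    unfolding B_def by (rule finite_subset[OF _ poly_roots_finite[OF assms(1)]]) auto
  moreover have "P \<alpha> \<noteq> 0" if "\<alpha> \<in> B" for \<alpha>
  proof -
    from that obtain i where "i \<in> {1..m}" "poly (f i) \<alpha> \<noteq> 0" unfolding B_def by blast
    then show ?thesis unfolding P_def by (rule linear_form_poly_nonzero)
  qed
  ultimately have "finite ({x. poly Q x = 0} \<union> (\<Union>\<alpha>\<in>B. {x. poly (P \<alpha>) x = 0}))"
    using assms(2) by (auto intro!: poly_roots_finite)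
  then obtain x where "x \<notin> {x. poly Q x = 0} \<union> (\<Union>\<alpha>\<in>B. {x. poly (P \<alpha>) x = 0})"
    using ex_new_if_finite[OF infinite_UNIV_char_0] by blast
  then show ?thesis unfolding separating_def B_def P_def by blast
qed

text \<open>The core of the argument over C: a vanishing resultant gives a common root of f_0
  and sum x^i f_i, and separation turns it into a common root of all f_i.\<close>
lemma common_root_from_resultant:
  fixes f :: "nat \<Rightarrow> complex poly"
  assumes sep: "separating m f x"
    and res: "resultant (f 0) (\<Sum>i\<in>{1..m}. smult (x ^ i) (f i)) = 0"
  shows "\<exists>\<beta>. \<forall>i\<in>{0..m}. poly (f i) \<beta> = 0"
proof -
  let ?g = "\<Sum>i\<in>{1..m}. smult (x ^ i) (f i)"
  have "degree (gcd (f 0) ?g) \<noteq> 0" using res by (simp add: resultant_0_gcd)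
  then have "\<not> constant (poly (gcd (f 0) ?g))" by (simp add: constant_degree)
  then obtain \<beta> where "poly (gcd (f 0) ?g) \<beta> = 0"
    using fundamental_theorem_of_algebra by blast
  then have root0: "poly (f 0) \<beta> = 0" and root_g: "poly ?g \<beta> = 0"
    by (meson poly_eq_0_iff_dvd dvd_trans gcd_dvd1 gcd_dvd2)+
  have "poly (linear_form_poly m (\<lambda>i. poly (f i) \<beta>)) x = poly ?g \<beta>"
    by (simp add: poly_linear_form_poly poly_sum mult.commute)
  with root_g sep root0 have "\<forall>i\<in>{1..m}. poly (f i) \<beta> = 0"
    unfolding separating_def by auto
  with root0 have "\<forall>i\<in>{0..m}. poly (f i) \<beta> = 0"
    by (metis atLeastAtMost_iff not_gr0 Suc_leI One_nat_def)
  then show ?thesis ..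
qed

theorem mainTheorem12:
  fixes m :: nat and F :: "nat \<Rightarrow> poly3" and t1 t2 :: complex
  assumes curves: "\<forall>i\<in>{0..m}. defines_curve (F i)"
    and pos_deg: "\<forall>i\<in>{1..m}. degree (F i) > 0"
    and same_deg: "\<exists>d. \<forall>i\<in>{1..m}. homogeneous3 d (F i)"
    and coprime: "Gcd (F ` {1..m}) = 1"
    and nonzero: "(t1, t2) \<noteq> (0, 0)"
    and con_zero: "eval2 (content_c (resultant (lift_c (F 0)) (generic_comb m F))) t1 t2 = 0"
    and lc0: "eval2 (lead_coeff (F 0)) t1 t2 \<noteq> 0"
    and lcF: "\<exists>\<mu>. eval2 (Poly_Mapping.lookup (lead_coeff (generic_comb m F)) \<mu>) t1 t2 \<noteq> 0"
  shows "\<exists>t0. \<forall>i\<in>{0..m}. eval3 (F i) t0 t1 t2 = 0"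
proof -
  define ev where "ev q = eval2 q t1 t2" for q
  have ev: "comm_ring_hom ev" unfolding ev_def by (rule eval2_hom)
  define G where "G = generic_comb m F"
  define f where "f i = map_poly ev (F i)" for i
  define Q where "Q = linear_form_poly m (\<lambda>i. ev (coeff (F i) (degree G)))"
  have deg_f0: "degree (f 0) = degree (F 0)"
    using lc0 by (simp add: f_def ev_def eval2_def degree_map_poly_lead_coeff)
  have "coeff (f 0) (degree (F 0)) \<noteq> 0"
    using lc0 by (simp add: f_def ev_def eval2_def coeff_map_poly)
  then have "f 0 \<noteq> 0" by (metis coeff_0)
  moreover have "Q \<noteq> 0"
    using lcF lead_coeff_generic_comb_witness[OF ev] by (auto simp: Q_def G_def ev_def)
  ultimately
  obtain x where Qx: "poly Q x \<noteq> 0" and sep: "separating m f x"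
    using separating_point_exists by blast
  define E where "E = kronecker_eval ev x"
  interpret E: comm_ring_hom E unfolding E_def using ev by (rule kronecker_eval_hom)
  have images: "map_poly E (lift_c (F 0)) = f 0" "map_poly E G = (\<Sum>i\<in>{1..m}. smult (x ^ i) (f i))"
    by (simp_all add: E_def G_def f_def kronecker_eval_lift_c[OF ev] kronecker_eval_generic_comb[OF ev])
  have "degree (map_poly E (lift_c (F 0))) = degree (lift_c (F 0))"
    by (simp add: images deg_f0 degree_lift_c)
  moreover have "E (lead_coeff G) = poly Q x"
    by (simp add: E_def Q_def G_def kronecker_eval_lead_coeff_generic_comb[OF ev])
  then have "degree (map_poly E G) = degree G"
    using Qx by (intro degree_map_poly_lead_coeff) simp_all
  ultimately have "resultant (f 0) (\<Sum>i\<in>{1..m}. smult (x ^ i) (f i)) = E (resultant (lift_c (F 0)) G)"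
    by (metis images E.resultant_map_poly)
  also have "\<dots> = 0"
    using con_zero ev by (simp add: E_def G_def ev_def kronecker_eval_content_zero)
  finally have "\<exists>\<beta>. \<forall>i\<in>{0..m}. poly (f i) \<beta> = 0"
    using sep by (intro common_root_from_resultant)
  then show ?thesis unfolding f_def ev_def eval3_def .
qed

end
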